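(* Let $\kappa$ be an uncountable regular cardinal and $\mu$ a cardinal with $\mu=\mu^{<\kappa}<2^\kappa$. Assume that every subset of ${}^\kappa\kappa$ of cardinality $\mu$ is a $\mathbf{\Sigma}^1_1$-subset. Then every continuous image of a closed subset of ${}^\kappa\mu$ (i.e. every set of the form $\mathrm{ran}(f)$ where $A\subseteq{}^\kappa\mu$ is closed and $f:A\to{}^\kappa\kappa$ is continuous) is a $\mathbf{\Sigma}^1_1$-subset of ${}^\kappa\kappa$.
   Context: For a cardinal $\nu$, ${}^\kappa\nu$ carries the topology with basic open sets $N_s=\{x\in{}^\kappa\nu : s\subseteq x\}$, $s$ a function from an ordinal below $\kappa$ to $\nu$. A subset of ${}^\kappa\kappa$ is $\mathbf{\Sigma}^1_1$ if it is the projection onto the first coordinate of a closed subset of ${}^\kappa\kappa\times{}^\kappa\kappa$. *)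

theory Defs
  imports "HOL-Analysis.Analysis"
begin

text \<open>The cardinal kappa is represented by a cardinal well-order k (on Field k);
ordinals below kappa are the elements of Field k, and the ordinal alpha is
identified with its set of predecessors underS k alpha.\<close>

definition gbaire_space :: "'a rel \<Rightarrow> 'b set \<Rightarrow> ('a \<Rightarrow> 'b) set" where
  "gbaire_space k V = (Field k \<rightarrow>\<^sub>E V)"

definition gbaire_basic :: "'a rel \<Rightarrow> 'b set \<Rightarrow> ('a \<Rightarrow> 'b) set set" where
  "gbaire_basic k V =
     {{x \<in> gbaire_space k V. \<forall>\<beta>\<in>underS k \<alpha>. x \<beta> = s \<beta>} | \<alpha> s.
        \<alpha> \<in> Field k \<and> s \<in> underS k \<alpha> \<rightarrow>\<^sub>E V}"

definition gbaire :: "'a rel \<Rightarrow> 'b set \<Rightarrow> ('a \<Rightarrow> 'b) topology" where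
  "gbaire k V = subtopology (topology_generated_by (gbaire_basic k V)) (gbaire_space k V)"

definition Sigma11 :: "'a rel \<Rightarrow> ('a \<Rightarrow> 'a) set \<Rightarrow> bool" where
  "Sigma11 k X \<longleftrightarrow>
     (\<exists>C. closedin (prod_topology (gbaire k (Field k)) (gbaire k (Field k))) C \<and> X = fst ` C)"

end

theory Submission
  imports Defs
begin

text \<open>
  Fix a pairing of \<kappa> \<times> \<kappa> onto \<kappa> and an injection of M into \<kappa>^\<kappa> (names). For
  \<alpha> < \<kappa> and x \<in> A, the triple (\<alpha>, f(x) below \<alpha>, names of x below \<alpha>) is coded by a point
  of \<kappa>^\<kappa>. As \<mu>^<\<kappa> = \<mu> there are at most \<mu> codes; padded with \<mu> further
  points they form a set of size \<mu>, hence the projection of a closed set D. Now y \<in> f[A] iff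
  some p \<in> \<kappa>^\<kappa> encodes a sequence of names together with, for every \<alpha>, a D-witness for
  the code of \<alpha>, y and these names. Such pairs (y, p) form a closed set because every
  coordinate of a code depends on a single coordinate of p and on y below \<alpha>, and \<kappa> is
  regular. Conversely such a p yields, for each \<alpha>, a point x_\<alpha> \<in> A whose names and image
  agree below \<alpha> with those given by p and y; the names glue to a point x, which lies in A
  because A is closed, and f(x) = y by continuity. The case |M| \<le> 1 is trivial, and otherwise
  \<mu>^<\<kappa> = \<mu> forces \<kappa> \<le> \<mu>, as needed for counting the codes.
\<close>

unbundle cardinal_syntax

section \<open>Cardinal arithmetic\<close>

lemma Func_eq_PiE: "Func A B = A \<rightarrow>\<^sub>E B"
  by (auto simp: Func_def PiE_def extensional_def)

lemma card_of_PiE_mono2: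
  assumes "|B| \<le>o |B'|"
  shows "|A \<rightarrow>\<^sub>E B| \<le>o |A \<rightarrow>\<^sub>E B'|"
  using cexp_mono1[OF assms card_of_Card_order[of A]] by (simp add: cexp_def Func_eq_PiE Field_card_of)

lemma card_of_Pow_ordLeq_PiE:
  assumes "m \<in> M" "m' \<in> M" "m \<noteq> m'"
  shows "|Pow S| \<le>o |S \<rightarrow>\<^sub>E M|"
proof -
  have "inj_on (\<lambda>b. if b then m else m') UNIV" "(\<lambda>b. if b then m else m') ` UNIV \<subseteq> M"
    using assms by (auto simp: inj_on_def)
  then have "|UNIV :: bool set| \<le>o |M|"
    by (subst card_of_ordLeq[symmetric]) blast
  then have "|Func S (UNIV :: bool set)| \<le>o |S \<rightarrow>\<^sub>E M|"
    unfolding Func_eq_PiE by (rule card_of_PiE_mono2)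
  with card_of_Pow_Func show ?thesis
    by (rule ordIso_ordLeq_trans)
qed

lemma card_of_PiE_Times_ordLeq:
  assumes "infinite M" "|N| \<le>o |M|" "|S \<rightarrow>\<^sub>E M| \<le>o |M|"
  shows "|S \<rightarrow>\<^sub>E (N \<times> M)| \<le>o |M|"
proof -
  have "|N \<times> M| \<le>o |M|"
  proof (cases "N = {}")
    case True
    then show ?thesis by (simp add: card_of_empty)
  next
    case False
    then show ?thesis
      using card_of_Times_infinite[OF assms(1) False assms(2)] ordIso_imp_ordLeq by blast
  qed
  then show ?thesis
    by (rule ordLeq_transitive[OF card_of_PiE_mono2 assms(3)])
qed

lemma card_of_ordLess_imp_ordLeq_underS:
  assumes "Card_order k" "|A| <o k"
  shows "\<exists>\<alpha>\<in>Field k. |A| \<le>o |underS k \<alpha>|"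
proof -
  have "Well_order k"
    using assms(1) card_order_on_well_order_on by blast
  then obtain \<alpha> where \<alpha>: "\<alpha> \<in> Field k" "( |A|, Restr k (underS k \<alpha>)) \<in> ordIso"
    using assms(2) ordLess_iff_ordIso_Restr[OF _ card_of_Well_order] by blast
  have "|A| \<le>o |Field (Restr k (underS k \<alpha>))|"
    using card_of_mono2[OF ordIso_imp_ordLeq[OF \<alpha>(2)]] by (simp add: Field_card_of)
  also have "|Field (Restr k (underS k \<alpha>))| \<le>o |underS k \<alpha>|"
    by (rule card_of_mono1[OF Field_Restr_subset])
  finally show ?thesis
    using \<alpha>(1) by blast
qed

lemma card_of_Field_ordLeq_if_PiE_ordLeq:
  assumes k: "Card_order k" and M: "m \<in> M" "m' \<in> M" "m \<noteq> m'"
    and small_powers: "\<forall>\<alpha>\<in>Field k. |underS k \<alpha> \<rightarrow>\<^sub>E M| \<le>o |M|"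
  shows "|Field k| \<le>o |M|"
proof (rule ccontr)
  assume "\<not> |Field k| \<le>o |M|"
  then have "|M| <o |Field k|"
    using not_ordLeq_iff_ordLess[OF card_of_Well_order card_of_Well_order] by blast
  then have "|M| <o k"
    using card_of_Field_ordIso[OF k] by (rule ordLess_ordIso_trans)
  then obtain \<alpha> where \<alpha>: "\<alpha> \<in> Field k" "|M| \<le>o |underS k \<alpha>|"
    using card_of_ordLess_imp_ordLeq_underS[OF k] by blast
  have "|Pow (underS k \<alpha>)| \<le>o |underS k \<alpha> \<rightarrow>\<^sub>E M|"
    using card_of_Pow_ordLeq_PiE[OF M] .
  also have "|underS k \<alpha> \<rightarrow>\<^sub>E M| \<le>o |M|"
    using small_powers \<alpha>(1) by blast
  also note \<alpha>(2)
  finally show False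
    using not_ordLess_ordLeq[OF card_of_Pow] by blast
qed

section \<open>Neighbourhoods in the generalized Baire space\<close>

definition agree_below :: "'a rel \<Rightarrow> 'a \<Rightarrow> ('a \<Rightarrow> 'b) \<Rightarrow> ('a \<Rightarrow> 'b) \<Rightarrow> bool" where
  "agree_below k \<beta> z z' \<longleftrightarrow> (\<forall>\<delta>\<in>underS k \<beta>. z \<delta> = z' \<delta>)"

definition gbaire_nbhd :: "'a rel \<Rightarrow> 'b set \<Rightarrow> 'a \<Rightarrow> ('a \<Rightarrow> 'b) \<Rightarrow> ('a \<Rightarrow> 'b) set" where
  "gbaire_nbhd k V \<beta> z = {z' \<in> gbaire_space k V. agree_below k \<beta> z z'}"

lemma agree_below_refl [simp]: "agree_below k \<beta> z z"
  by (simp add: agree_below_def)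

lemma agree_belowD: "agree_below k \<beta> z z' \<Longrightarrow> \<delta> \<in> underS k \<beta> \<Longrightarrow> z \<delta> = z' \<delta>"
  by (simp add: agree_below_def)

lemma agree_below_mono:
  "agree_below k \<beta> z z' \<Longrightarrow> underS k \<beta>' \<subseteq> underS k \<beta> \<Longrightarrow> agree_below k \<beta>' z z'"
  unfolding agree_below_def by blast

lemma gbaire_space_eqI:
  "z \<in> gbaire_space k V \<Longrightarrow> z' \<in> gbaire_space k V \<Longrightarrow> (\<And>\<delta>. \<delta> \<in> Field k \<Longrightarrow> z \<delta> = z' \<delta>) \<Longrightarrow> z = z'"
  unfolding gbaire_space_def by (rule PiE_ext)

lemma gbaire_spaceD: "z \<in> gbaire_space k V \<Longrightarrow> \<delta> \<in> Field k \<Longrightarrow> z \<delta> \<in> V"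
  unfolding gbaire_space_def by auto

lemma Sigma11_empty: "Sigma11 k {}"
  unfolding Sigma11_def by (intro exI[of _ "{}"]) simp

locale infinite_cardinal =
  fixes k :: "'a rel"
  assumes card_order: "Card_order k" and infinite_Field: "infinite (Field k)"
begin

lemma Field_not_empty: "Field k \<noteq> {}"
  using infinite_Field by auto

lemma well_order: "Well_order k"
  using card_order card_order_on_well_order_on by blast

lemma underS_mono: "(\<beta>, \<beta>') \<in> k \<Longrightarrow> underS k \<beta> \<subseteq> underS k \<beta>'"
  using well_order by (simp add: order_on_defs underS_incr)

lemma exists_above: "\<beta> \<in> Field k \<Longrightarrow> \<exists>\<beta>'\<in>Field k. \<beta> \<in> underS k \<beta>'"
  using infinite_Card_order_limit[OF card_order infinite_Field] by (auto intro: underS_I)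

lemma exists_upper_bound:
  assumes "\<beta>\<^sub>1 \<in> Field k" "\<beta>\<^sub>2 \<in> Field k"
  obtains \<beta> where "\<beta> \<in> Field k" "underS k \<beta>\<^sub>1 \<subseteq> underS k \<beta>" "underS k \<beta>\<^sub>2 \<subseteq> underS k \<beta>"
proof -
  have "wo_rel k"
    using well_order by (simp add: wo_rel_def)
  then have "(\<beta>\<^sub>1, \<beta>\<^sub>2) \<in> k \<or> (\<beta>\<^sub>2, \<beta>\<^sub>1) \<in> k"
    using assms wo_rel.TOTALS by blast
  then show thesis
  proof
    assume "(\<beta>\<^sub>1, \<beta>\<^sub>2) \<in> k"
    then show thesis
      using that[of \<beta>\<^sub>2] assms(2) underS_mono by blast
  next
    assume "(\<beta>\<^sub>2, \<beta>\<^sub>1) \<in> k"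
    then show thesis
      using that[of \<beta>\<^sub>1] assms(1) underS_mono by blast
  qed
qed

lemma gbaire_nbhd_basic:
  assumes "z \<in> gbaire_space k V" "\<beta> \<in> Field k"
  shows "gbaire_nbhd k V \<beta> z \<in> gbaire_basic k V"
proof -
  have "restrict z (underS k \<beta>) \<in> underS k \<beta> \<rightarrow>\<^sub>E V"
    using assms(1) by (auto dest: underS_Field gbaire_spaceD)
  moreover have "gbaire_nbhd k V \<beta> z =
      {x \<in> gbaire_space k V. \<forall>\<delta>\<in>underS k \<beta>. x \<delta> = restrict z (underS k \<beta>) \<delta>}"
    unfolding gbaire_nbhd_def agree_below_def by (simp add: eq_commute)
  ultimately show ?thesis
    unfolding gbaire_basic_def using assms(2) by blast
qed

lemma gbaire_nbhd_center: "z \<in> gbaire_space k V \<Longrightarrow> z \<in> gbaire_nbhd k V \<beta> z"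
  by (simp add: gbaire_nbhd_def)

lemma topspace_gbaire: "topspace (gbaire k V) = gbaire_space k V"
proof -
  obtain \<beta> where \<beta>: "\<beta> \<in> Field k"
    using Field_not_empty by blast
  have "gbaire_space k V \<subseteq> \<Union>(gbaire_basic k V)"
  proof
    fix z assume "z \<in> gbaire_space k V"
    then show "z \<in> \<Union>(gbaire_basic k V)"
      using gbaire_nbhd_basic[OF _ \<beta>] gbaire_nbhd_center by blast
  qed
  moreover have "\<Union>(gbaire_basic k V) \<subseteq> gbaire_space k V"
    by (auto simp: gbaire_basic_def)
  ultimately show ?thesis
    unfolding gbaire_def by auto
qed

lemma openin_gbaire_nbhd:
  assumes "z \<in> gbaire_space k V" "\<beta> \<in> Field k"
  shows "openin (gbaire k V) (gbaire_nbhd k V \<beta> z)"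
proof -
  have "openin (topology_generated_by (gbaire_basic k V)) (gbaire_nbhd k V \<beta> z)"
    using assms by (intro topology_generated_by_Basis gbaire_nbhd_basic)
  moreover have "gbaire_nbhd k V \<beta> z = gbaire_nbhd k V \<beta> z \<inter> gbaire_space k V"
    by (auto simp: gbaire_nbhd_def)
  ultimately show ?thesis
    unfolding gbaire_def openin_subtopology by blast
qed

lemma gbaire_nbhd_mono:
  "underS k \<beta>' \<subseteq> underS k \<beta> \<Longrightarrow> gbaire_nbhd k V \<beta> z \<subseteq> gbaire_nbhd k V \<beta>' z"
  unfolding gbaire_nbhd_def agree_below_def by blast

lemma generate_topology_on_gbaire_basic_nbhd:
  assumes "generate_topology_on (gbaire_basic k V) T"
  shows "\<forall>z\<in>T \<inter> gbaire_space k V. \<exists>\<beta>\<in>Field k. gbaire_nbhd k V \<beta> z \<subseteq> T"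
  using assms
proof induction
  case (Int S S')
  show ?case
  proof
    fix z assume "z \<in> S \<inter> S' \<inter> gbaire_space k V"
    then obtain \<beta>\<^sub>1 \<beta>\<^sub>2 where \<beta>\<^sub>1: "\<beta>\<^sub>1 \<in> Field k" "gbaire_nbhd k V \<beta>\<^sub>1 z \<subseteq> S"
      and \<beta>\<^sub>2: "\<beta>\<^sub>2 \<in> Field k" "gbaire_nbhd k V \<beta>\<^sub>2 z \<subseteq> S'"
      using Int.IH by blast
    obtain \<beta> where "\<beta> \<in> Field k" "underS k \<beta>\<^sub>1 \<subseteq> underS k \<beta>" "underS k \<beta>\<^sub>2 \<subseteq> underS k \<beta>"
      using exists_upper_bound[OF \<beta>\<^sub>1(1) \<beta>\<^sub>2(1)] .
    with \<beta>\<^sub>1(2) \<beta>\<^sub>2(2) show "\<exists>\<beta>\<in>Field k. gbaire_nbhd k V \<beta> z \<subseteq> S \<inter> S'"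
      using gbaire_nbhd_mono by blast
  qed
next
  case (UN K)
  then show ?case by blast
next
  case (Basis S)
  then obtain \<alpha> s where "S = {x \<in> gbaire_space k V. \<forall>\<beta>\<in>underS k \<alpha>. x \<beta> = s \<beta>}" "\<alpha> \<in> Field k"
    unfolding gbaire_basic_def by blast
  then show ?case
    unfolding gbaire_nbhd_def agree_below_def by (auto intro!: bexI[of _ \<alpha>])
qed simp

lemma openin_gbaire_iff:
  "openin (gbaire k V) U \<longleftrightarrow>
     U \<subseteq> gbaire_space k V \<and> (\<forall>z\<in>U. \<exists>\<beta>\<in>Field k. gbaire_nbhd k V \<beta> z \<subseteq> U)"
proof
  assume "openin (gbaire k V) U"
  then obtain T where T: "generate_topology_on (gbaire_basic k V) T" "U = T \<inter> gbaire_space k V"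
    unfolding gbaire_def openin_subtopology openin_topology_generated_by_iff by blast
  with generate_topology_on_gbaire_basic_nbhd[OF T(1)]
  show "U \<subseteq> gbaire_space k V \<and> (\<forall>z\<in>U. \<exists>\<beta>\<in>Field k. gbaire_nbhd k V \<beta> z \<subseteq> U)"
    unfolding gbaire_nbhd_def by blast
next
  assume U: "U \<subseteq> gbaire_space k V \<and> (\<forall>z\<in>U. \<exists>\<beta>\<in>Field k. gbaire_nbhd k V \<beta> z \<subseteq> U)"
  show "openin (gbaire k V) U"
  proof (subst openin_subopen, intro ballI)
    fix z assume "z \<in> U"
    with U obtain \<beta> where "\<beta> \<in> Field k" "gbaire_nbhd k V \<beta> z \<subseteq> U"
      by blast
    moreover have "z \<in> gbaire_nbhd k V \<beta> z"
      using U \<open>z \<in> U\<close> gbaire_nbhd_center by blast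
    ultimately show "\<exists>T. openin (gbaire k V) T \<and> z \<in> T \<and> T \<subseteq> U"
      using openin_gbaire_nbhd U \<open>z \<in> U\<close> by blast
  qed
qed

lemma closedin_gbaire_subset: "closedin (gbaire k V) A \<Longrightarrow> A \<subseteq> gbaire_space k V"
  using closedin_subset by (fastforce simp: topspace_gbaire)

lemma closedin_gbaire_limit:
  assumes "closedin (gbaire k V) A" "z \<in> gbaire_space k V"
    and approx: "\<And>\<beta>. \<beta> \<in> Field k \<Longrightarrow> \<exists>z'\<in>A. agree_below k \<beta> z z'"
  shows "z \<in> A"
proof (rule ccontr)
  assume "z \<notin> A"
  moreover have "openin (gbaire k V) (gbaire_space k V - A)"
    using assms(1) by (simp add: closedin_def topspace_gbaire)
  ultimately obtain \<beta> where "\<beta> \<in> Field k" "gbaire_nbhd k V \<beta> z \<subseteq> gbaire_space k V - A"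
    using assms(2) unfolding openin_gbaire_iff by blast
  moreover have "A \<subseteq> gbaire_space k V"
    using assms(1) by (rule closedin_gbaire_subset)
  ultimately show False
    using approx unfolding gbaire_nbhd_def by blast
qed

lemma topspace_gbaire_subtopology:
  "A \<subseteq> gbaire_space k V \<Longrightarrow> topspace (subtopology (gbaire k V) A) = A"
  by (simp add: topspace_gbaire Int_absorb1)

lemma continuous_map_gbaire_image_subset:
  assumes "continuous_map (subtopology (gbaire k V) A) (gbaire k W) f" "A \<subseteq> gbaire_space k V"
  shows "f ` A \<subseteq> gbaire_space k W"
  using continuous_map_image_subset_topspace[OF assms(1)] assms(2)
  by (simp add: topspace_gbaire Int_absorb1)

lemma continuous_map_gbaire_agree:
  assumes f: "continuous_map (subtopology (gbaire k V) A) (gbaire k W) f"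
    and A: "A \<subseteq> gbaire_space k V" and x: "x \<in> A" and \<gamma>: "\<gamma> \<in> Field k"
  shows "\<exists>\<alpha>\<in>Field k. \<forall>x'\<in>A. agree_below k \<alpha> x x' \<longrightarrow> agree_below k \<gamma> (f x) (f x')"
proof -
  let ?P = "{x' \<in> A. f x' \<in> gbaire_nbhd k W \<gamma> (f x)}"
  have fx: "f x \<in> gbaire_space k W"
    using continuous_map_gbaire_image_subset[OF f A] x by blast
  have "openin (subtopology (gbaire k V) A) ?P"
    using openin_continuous_map_preimage[OF f openin_gbaire_nbhd[OF fx \<gamma>]]
    unfolding topspace_gbaire_subtopology[OF A] .
  then obtain T where T: "openin (gbaire k V) T" "?P = T \<inter> A"
    unfolding openin_subtopology by blast
  have "x \<in> ?P"
    using x fx gbaire_nbhd_center by blast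
  with T obtain \<alpha> where \<alpha>: "\<alpha> \<in> Field k" "gbaire_nbhd k V \<alpha> x \<subseteq> T"
    unfolding openin_gbaire_iff by blast
  show ?thesis
  proof (intro bexI[OF _ \<alpha>(1)] ballI impI)
    fix x' assume "x' \<in> A" "agree_below k \<alpha> x x'"
    then have "x' \<in> ?P"
      using \<alpha>(2) T(2) A unfolding gbaire_nbhd_def by blast
    then show "agree_below k \<gamma> (f x) (f x')"
      by (simp add: gbaire_nbhd_def)
  qed
qed

lemma continuous_map_gbaire_limit:
  assumes f: "continuous_map (subtopology (gbaire k V) A) (gbaire k W) f"
    and A: "closedin (gbaire k V) A"
    and x: "x \<in> gbaire_space k V" and y: "y \<in> gbaire_space k W"
    and approx: "\<And>\<alpha>. \<alpha> \<in> Field k \<Longrightarrow> \<exists>x'\<in>A. agree_below k \<alpha> x x' \<and> agree_below k \<alpha> y (f x')"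
  shows "x \<in> A" and "f x = y"
proof -
  have A_sub: "A \<subseteq> gbaire_space k V"
    using A by (rule closedin_gbaire_subset)
  show "x \<in> A"
    using closedin_gbaire_limit[OF A x] approx by blast
  then have "f x \<in> gbaire_space k W"
    using continuous_map_gbaire_image_subset[OF f A_sub] by blast
  then show "f x = y"
  proof (rule gbaire_space_eqI[OF _ y])
    fix \<gamma> assume "\<gamma> \<in> Field k"
    then obtain \<gamma>' where \<gamma>': "\<gamma>' \<in> Field k" "\<gamma> \<in> underS k \<gamma>'"
      using exists_above by blast
    obtain \<alpha> where \<alpha>: "\<alpha> \<in> Field k" "\<forall>x'\<in>A. agree_below k \<alpha> x x' \<longrightarrow> agree_below k \<gamma>' (f x) (f x')"
      using continuous_map_gbaire_agree[OF f A_sub \<open>x \<in> A\<close> \<gamma>'(1)] by blast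
    obtain \<beta> where \<beta>: "\<beta> \<in> Field k" "underS k \<alpha> \<subseteq> underS k \<beta>" "underS k \<gamma>' \<subseteq> underS k \<beta>"
      using exists_upper_bound \<alpha>(1) \<gamma>'(1) by metis
    then obtain x' where "x' \<in> A" "agree_below k \<beta> x x'" "agree_below k \<beta> y (f x')"
      using approx by blast
    then have "agree_below k \<gamma>' (f x) (f x')" "agree_below k \<gamma>' y (f x')"
      using \<alpha>(2) \<beta> agree_below_mono by metis+
    then show "f x \<gamma> = y \<gamma>"
      using \<gamma>'(2) unfolding agree_below_def by simp
  qed
qed

lemma continuous_map_prod_gbaireI:
  assumes maps: "\<And>y p. y \<in> gbaire_space k V \<Longrightarrow> p \<in> gbaire_space k W \<Longrightarrow> g (y, p) \<in> gbaire_space k U"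
    and uniform: "\<And>\<gamma>. \<gamma> \<in> Field k \<Longrightarrow> \<exists>\<beta>\<in>Field k.
      \<forall>y\<in>gbaire_space k V. \<forall>p\<in>gbaire_space k W. \<forall>y'\<in>gbaire_space k V. \<forall>p'\<in>gbaire_space k W.
        agree_below k \<beta> y y' \<and> agree_below k \<beta> p p' \<longrightarrow> agree_below k \<gamma> (g (y, p)) (g (y', p'))"
  shows "continuous_map (prod_topology (gbaire k V) (gbaire k W)) (gbaire k U) g"
proof -
  let ?X = "prod_topology (gbaire k V) (gbaire k W)"
  have topspace: "topspace ?X = gbaire_space k V \<times> gbaire_space k W"
    by (simp add: topspace_gbaire)
  have "openin ?X {z \<in> topspace ?X. g z \<in> G}" if G: "openin (gbaire k U) G" for G
  proof (subst openin_subopen, intro ballI)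
    fix z assume "z \<in> {z \<in> topspace ?X. g z \<in> G}"
    then obtain y p where yp: "z = (y, p)" "y \<in> gbaire_space k V" "p \<in> gbaire_space k W" "g (y, p) \<in> G"
      unfolding topspace by blast
    then obtain \<gamma> where \<gamma>: "\<gamma> \<in> Field k" "gbaire_nbhd k U \<gamma> (g (y, p)) \<subseteq> G"
      using G unfolding openin_gbaire_iff by blast
    then obtain \<beta> where \<beta>: "\<beta> \<in> Field k"
      "\<And>y' p'. y' \<in> gbaire_space k V \<Longrightarrow> p' \<in> gbaire_space k W \<Longrightarrow>
         agree_below k \<beta> y y' \<Longrightarrow> agree_below k \<beta> p p' \<Longrightarrow> agree_below k \<gamma> (g (y, p)) (g (y', p'))"
      using uniform yp(2,3) by meson
    let ?T = "gbaire_nbhd k V \<beta> y \<times> gbaire_nbhd k W \<beta> p"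
    have "openin ?X ?T"
      using yp \<beta>(1) by (simp add: openin_prod_Times_iff openin_gbaire_nbhd)
    moreover have "z \<in> ?T"
      using yp by (simp add: gbaire_nbhd_center)
    moreover have "?T \<subseteq> {z \<in> topspace ?X. g z \<in> G}"
    proof (intro subsetI, elim SigmaE)
      fix z' y' p' assume y': "y' \<in> gbaire_nbhd k V \<beta> y" and p': "p' \<in> gbaire_nbhd k W \<beta> p"
        and z': "z' = (y', p')"
      have "g (y', p') \<in> gbaire_nbhd k U \<gamma> (g (y, p))"
        using y' p' \<beta>(2) maps unfolding gbaire_nbhd_def by simp
      then show "z' \<in> {z \<in> topspace ?X. g z \<in> G}"
        using y' p' z' \<gamma>(2) unfolding topspace gbaire_nbhd_def by blast
    qed
    ultimately show "\<exists>T. openin ?X T \<and> z \<in> T \<and> T \<subseteq> {z \<in> topspace ?X. g z \<in> G}"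
      by blast
  qed
  moreover have "g ` topspace ?X \<subseteq> topspace (gbaire k U)"
    using maps unfolding topspace topspace_gbaire by blast
  ultimately show ?thesis
    unfolding continuous_map by blast
qed

lemma regularCard_bounded:
  assumes "regularCard k" "S \<subseteq> Field k" "|S| <o k"
  shows "\<exists>\<beta>\<in>Field k. S \<subseteq> underS k \<beta>"
proof (rule regularCard_UNION[OF card_order assms(1) _ _ assms(3)])
  show "relChain k (underS k)"
    unfolding relChain_def using underS_mono by blast
  show "S \<subseteq> (\<Union>\<beta>\<in>Field k. underS k \<beta>)"
    using assms(2) exists_above by blast
qed

lemma continuous_map_prod_gbaire_coordinatewise:
  assumes regular: "regularCard k" and \<alpha>: "\<alpha> \<in> Field k" and h: "h ` Field k \<subseteq> Field k"
    and maps: "\<And>y p. y \<in> gbaire_space k V \<Longrightarrow> p \<in> gbaire_space k W \<Longrightarrow> g (y, p) \<in> gbaire_space k U"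
    and dependence: "\<And>y p y' p' \<xi>. y \<in> gbaire_space k V \<Longrightarrow> p \<in> gbaire_space k W \<Longrightarrow>
      y' \<in> gbaire_space k V \<Longrightarrow> p' \<in> gbaire_space k W \<Longrightarrow> \<xi> \<in> Field k \<Longrightarrow>
      agree_below k \<alpha> y y' \<Longrightarrow> p (h \<xi>) = p' (h \<xi>) \<Longrightarrow> g (y, p) \<xi> = g (y', p') \<xi>"
  shows "continuous_map (prod_topology (gbaire k V) (gbaire k W)) (gbaire k U) g"
proof (rule continuous_map_prod_gbaireI[where g = g and V = V and W = W and U = U, OF maps])
  fix \<gamma> assume \<gamma>: "\<gamma> \<in> Field k"
  have "h ` underS k \<gamma> \<subseteq> Field k"
    using h by (auto dest: underS_Field)
  moreover have "|h ` underS k \<gamma>| <o k"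
    by (rule ordLeq_ordLess_trans[OF card_of_image card_of_underS[OF card_order \<gamma>]])
  ultimately obtain \<beta>' where \<beta>': "\<beta>' \<in> Field k" "h ` underS k \<gamma> \<subseteq> underS k \<beta>'"
    using regularCard_bounded[OF regular] by meson
  obtain \<beta> where \<beta>: "\<beta> \<in> Field k" "underS k \<alpha> \<subseteq> underS k \<beta>" "underS k \<beta>' \<subseteq> underS k \<beta>"
    using exists_upper_bound[OF \<alpha> \<beta>'(1)] .
  show "\<exists>\<beta>\<in>Field k. \<forall>y\<in>gbaire_space k V. \<forall>p\<in>gbaire_space k W. \<forall>y'\<in>gbaire_space k V.
      \<forall>p'\<in>gbaire_space k W. agree_below k \<beta> y y' \<and> agree_below k \<beta> p p' \<longrightarrow>
        agree_below k \<gamma> (g (y, p)) (g (y', p'))"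
  proof (intro bexI[OF _ \<beta>(1)] ballI impI, elim conjE)
    fix y p y' p'
    assume spaces: "y \<in> gbaire_space k V" "p \<in> gbaire_space k W" "y' \<in> gbaire_space k V" "p' \<in> gbaire_space k W"
      and "agree_below k \<beta> y y'" "agree_below k \<beta> p p'"
    have y_agree: "agree_below k \<alpha> y y'"
      using \<open>agree_below k \<beta> y y'\<close> \<beta>(2) by (rule agree_below_mono)
    have p_agree: "p (h \<xi>) = p' (h \<xi>)" if "\<xi> \<in> underS k \<gamma>" for \<xi>
    proof (rule agree_belowD[OF \<open>agree_below k \<beta> p p'\<close>])
      show "h \<xi> \<in> underS k \<beta>"
        using \<beta>(3) \<beta>'(2) that by blast
    qed
    show "agree_below k \<gamma> (g (y, p)) (g (y', p'))"
      unfolding agree_below_def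
    proof
      fix \<xi> assume \<xi>: "\<xi> \<in> underS k \<gamma>"
      show "g (y, p) \<xi> = g (y', p') \<xi>"
        by (rule dependence[OF spaces underS_Field[OF \<xi>] y_agree p_agree[OF \<xi>]])
    qed
  qed
qed

end

section \<open>Coding by interleaving\<close>

locale gbaire_pairing = infinite_cardinal k for k :: "'a rel" +
  fixes \<pi> :: "'a \<times> 'a \<Rightarrow> 'a" and tag :: "nat \<Rightarrow> 'a"
  assumes pairing: "bij_betw \<pi> (Field k \<times> Field k) (Field k)"
    and tag_inj: "inj tag" and tag_in_Field: "tag n \<in> Field k"
begin

lemma tag_eq_iff [simp]: "tag m = tag n \<longleftrightarrow> m = n"
  using tag_inj by (simp add: inj_eq)

definition unpair :: "'a \<Rightarrow> 'a \<times> 'a" where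
  "unpair = inv_into (Field k \<times> Field k) \<pi>"

lemma pair_in_Field: "i \<in> Field k \<Longrightarrow> \<delta> \<in> Field k \<Longrightarrow> \<pi> (i, \<delta>) \<in> Field k"
  using pairing by (auto simp: bij_betw_def)

lemma unpair_pair [simp]: "i \<in> Field k \<Longrightarrow> \<delta> \<in> Field k \<Longrightarrow> unpair (\<pi> (i, \<delta>)) = (i, \<delta>)"
  using pairing by (simp add: unpair_def bij_betw_def inv_into_f_f)

lemma unpair_in_Field:
  assumes "\<xi> \<in> Field k"
  shows "fst (unpair \<xi>) \<in> Field k" and "snd (unpair \<xi>) \<in> Field k"
proof -
  have "unpair \<xi> \<in> Field k \<times> Field k"
    using assms pairing unfolding unpair_def bij_betw_def by (metis inv_into_into)
  then show "fst (unpair \<xi>) \<in> Field k" and "snd (unpair \<xi>) \<in> Field k"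
    by (simp_all add: mem_Times_iff)
qed

lemma Field_pairE:
  assumes "\<xi> \<in> Field k"
  obtains i \<delta> where "i \<in> Field k" "\<delta> \<in> Field k" "\<xi> = \<pi> (i, \<delta>)"
proof -
  have "\<xi> \<in> \<pi> ` (Field k \<times> Field k)"
    using assms pairing by (simp add: bij_betw_def)
  then obtain p where p: "p \<in> Field k \<times> Field k" "\<xi> = \<pi> p"
    by (rule imageE)
  then show thesis
    using that[of "fst p" "snd p"] by (simp add: mem_Times_iff)
qed

definition interleave :: "('a \<Rightarrow> 'a \<Rightarrow> 'b) \<Rightarrow> 'a \<Rightarrow> 'b" where
  "interleave u \<xi> = (if \<xi> \<in> Field k then case_prod u (unpair \<xi>) else undefined)"

lemma interleave_pair [simp]: "i \<in> Field k \<Longrightarrow> \<delta> \<in> Field k \<Longrightarrow> interleave u (\<pi> (i, \<delta>)) = u i \<delta>"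
  by (simp add: interleave_def pair_in_Field)

lemma interleave_in_gbaire_space:
  assumes "\<And>i \<delta>. i \<in> Field k \<Longrightarrow> \<delta> \<in> Field k \<Longrightarrow> u i \<delta> \<in> V"
  shows "interleave u \<in> gbaire_space k V"
proof -
  have "interleave u \<xi> \<in> V" if "\<xi> \<in> Field k" for \<xi>
    using that by (rule Field_pairE) (simp add: assms)
  then show ?thesis
    unfolding gbaire_space_def by (auto simp: interleave_def)
qed

lemma interleave_eq_iff:
  "interleave u = interleave u' \<longleftrightarrow> (\<forall>i\<in>Field k. \<forall>\<delta>\<in>Field k. u i \<delta> = u' i \<delta>)"
proof (intro iffI ballI)
  fix i \<delta> assume eq: "interleave u = interleave u'" and "i \<in> Field k" "\<delta> \<in> Field k"
  then have "interleave u (\<pi> (i, \<delta>)) = interleave u' (\<pi> (i, \<delta>))"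
    by simp
  with \<open>i \<in> Field k\<close> \<open>\<delta> \<in> Field k\<close> show "u i \<delta> = u' i \<delta>"
    by simp
next
  assume eq: "\<forall>i\<in>Field k. \<forall>\<delta>\<in>Field k. u i \<delta> = u' i \<delta>"
  show "interleave u = interleave u'"
  proof
    fix \<xi> show "interleave u \<xi> = interleave u' \<xi>"
    proof (cases "\<xi> \<in> Field k")
      case True
      then obtain i \<delta> where "i \<in> Field k" "\<delta> \<in> Field k" "\<xi> = \<pi> (i, \<delta>)"
        by (rule Field_pairE)
      with eq show ?thesis
        by simp
    qed (simp add: interleave_def)
  qed
qed

text \<open>
  Component \<open>tag 3\<close> tells codes apart from
  the padding points \<open>marked z\<close>.
\<close>

definition code :: "'a \<Rightarrow> ('a \<Rightarrow> 'a) \<Rightarrow> ('a \<Rightarrow> 'a \<Rightarrow> 'a) \<Rightarrow> 'a \<Rightarrow> 'a" where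
  "code \<alpha> y w = interleave (\<lambda>i.
     if i = tag 0 then (\<lambda>_. \<alpha>)
     else if i = tag 1 then (\<lambda>\<delta>. if \<delta> \<in> underS k \<alpha> then y \<delta> else tag 0)
     else if i = tag 2 then interleave (\<lambda>\<gamma>. if \<gamma> \<in> underS k \<alpha> then w \<gamma> else (\<lambda>_. tag 0))
     else (\<lambda>_. tag 0))"

definition marked :: "('a \<Rightarrow> 'a) \<Rightarrow> 'a \<Rightarrow> 'a" where
  "marked z = interleave (\<lambda>i. if i = tag 3 then (\<lambda>_. tag 1) else z)"

definition encode_seqs :: "('a \<Rightarrow> 'a \<Rightarrow> 'a) \<Rightarrow> ('a \<Rightarrow> 'a \<Rightarrow> 'a) \<Rightarrow> 'a \<Rightarrow> 'a" where
  "encode_seqs s t = interleave (\<lambda>i. if i = tag 0 then interleave s else interleave t)"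

definition decode_seq :: "('a \<Rightarrow> 'a) \<Rightarrow> nat \<Rightarrow> 'a \<Rightarrow> 'a \<Rightarrow> 'a" where
  "decode_seq p n \<gamma> = (\<lambda>\<epsilon>\<in>Field k. p (\<pi> (tag n, \<pi> (\<gamma>, \<epsilon>))))"

lemma code_in_gbaire_space:
  assumes "\<alpha> \<in> Field k" "y \<in> gbaire_space k (Field k)"
    and "\<And>\<gamma> \<epsilon>. \<gamma> \<in> underS k \<alpha> \<Longrightarrow> \<epsilon> \<in> Field k \<Longrightarrow> w \<gamma> \<epsilon> \<in> Field k"
  shows "code \<alpha> y w \<in> gbaire_space k (Field k)"
  unfolding code_def
proof (intro interleave_in_gbaire_space)
  have "interleave (\<lambda>\<gamma>. if \<gamma> \<in> underS k \<alpha> then w \<gamma> else (\<lambda>_. tag 0)) \<in> gbaire_space k (Field k)"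
    using assms(3) tag_in_Field by (intro interleave_in_gbaire_space) auto
  then show "(if i = tag 0 then (\<lambda>_. \<alpha>)
     else if i = tag 1 then (\<lambda>\<delta>. if \<delta> \<in> underS k \<alpha> then y \<delta> else tag 0)
     else if i = tag 2 then interleave (\<lambda>\<gamma>. if \<gamma> \<in> underS k \<alpha> then w \<gamma> else (\<lambda>_. tag 0))
     else (\<lambda>_. tag 0)) \<delta> \<in> Field k" if "\<delta> \<in> Field k" for i \<delta>
    using that assms(1,2) tag_in_Field by (auto dest: gbaire_spaceD)
qed

lemma code_eq_iff:
  "code \<alpha> y w = code \<alpha>' y' w' \<longleftrightarrow>
     \<alpha> = \<alpha>' \<and> agree_below k \<alpha> y y' \<and> (\<forall>\<gamma>\<in>underS k \<alpha>. \<forall>\<epsilon>\<in>Field k. w \<gamma> \<epsilon> = w' \<gamma> \<epsilon>)"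
  (is "?lhs \<longleftrightarrow> ?rhs")
proof
  assume ?lhs
  then have eq: "\<And>i \<delta>. i \<in> Field k \<Longrightarrow> \<delta> \<in> Field k \<Longrightarrow> code \<alpha> y w (\<pi> (i, \<delta>)) = code \<alpha>' y' w' (\<pi> (i, \<delta>))"
    by simp
  have "\<alpha> = \<alpha>'"
    using eq[OF tag_in_Field[of 0] tag_in_Field[of 0]] by (simp add: code_def tag_in_Field)
  moreover have "agree_below k \<alpha> y y'"
    unfolding agree_below_def
  proof
    fix \<delta> assume \<delta>: "\<delta> \<in> underS k \<alpha>"
    then show "y \<delta> = y' \<delta>"
      using eq[OF tag_in_Field[of 1] underS_Field[OF \<delta>]] \<open>\<alpha> = \<alpha>'\<close> underS_Field[OF \<delta>]
      by (simp add: code_def tag_in_Field)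
  qed
  moreover have "w \<gamma> \<epsilon> = w' \<gamma> \<epsilon>" if "\<gamma> \<in> underS k \<alpha>" "\<epsilon> \<in> Field k" for \<gamma> \<epsilon>
  proof -
    have \<gamma>: "\<gamma> \<in> Field k"
      using that(1) by (rule underS_Field)
    show ?thesis
      using eq[OF tag_in_Field[of 2] pair_in_Field[OF \<gamma> that(2)]] that \<gamma> \<open>\<alpha> = \<alpha>'\<close>
      by (simp add: code_def tag_in_Field pair_in_Field)
  qed
  ultimately show ?rhs
    by blast
next
  assume rhs: ?rhs
  then have "interleave (\<lambda>\<gamma>. if \<gamma> \<in> underS k \<alpha> then w \<gamma> else (\<lambda>_. tag 0)) =
    interleave (\<lambda>\<gamma>. if \<gamma> \<in> underS k \<alpha> then w' \<gamma> else (\<lambda>_. tag 0))"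
    unfolding interleave_eq_iff by auto
  with rhs show ?lhs
    unfolding code_def by (intro interleave_eq_iff[THEN iffD2]) (auto simp: agree_below_def)
qed

lemma code_neq_marked: "code \<alpha> y w \<noteq> marked z"
proof
  assume "code \<alpha> y w = marked z"
  then have "code \<alpha> y w (\<pi> (tag 3, tag 0)) = marked z (\<pi> (tag 3, tag 0))"
    by simp
  then show False
    by (simp add: code_def marked_def tag_in_Field)
qed

lemma marked_in_gbaire_space: "z \<in> gbaire_space k (Field k) \<Longrightarrow> marked z \<in> gbaire_space k (Field k)"
  unfolding marked_def by (intro interleave_in_gbaire_space) (auto simp: tag_in_Field dest: gbaire_spaceD)

lemma inj_on_marked: "inj_on marked (gbaire_space k V)"
proof (rule inj_onI)
  fix z z' assume z: "z \<in> gbaire_space k V" and z': "z' \<in> gbaire_space k V" and "marked z = marked z'"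
  then have "\<forall>\<delta>\<in>Field k. z \<delta> = z' \<delta>"
    unfolding marked_def interleave_eq_iff using tag_in_Field[of 0] by auto
  then show "z = z'"
    using gbaire_space_eqI[OF z z'] by blast
qed

lemma encode_seqs_in_gbaire_space:
  assumes "\<And>\<gamma>. \<gamma> \<in> Field k \<Longrightarrow> s \<gamma> \<in> gbaire_space k V" "\<And>\<gamma>. \<gamma> \<in> Field k \<Longrightarrow> t \<gamma> \<in> gbaire_space k V"
  shows "encode_seqs s t \<in> gbaire_space k V"
proof -
  have "interleave s \<in> gbaire_space k V" "interleave t \<in> gbaire_space k V"
    using assms by (metis interleave_in_gbaire_space gbaire_spaceD)+
  then show ?thesis
    unfolding encode_seqs_def by (intro interleave_in_gbaire_space) (simp add: gbaire_spaceD)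
qed

lemma decode_seq_in_gbaire_space:
  "p \<in> gbaire_space k V \<Longrightarrow> \<gamma> \<in> Field k \<Longrightarrow> decode_seq p n \<gamma> \<in> gbaire_space k V"
  unfolding decode_seq_def gbaire_space_def by (auto simp: pair_in_Field tag_in_Field)

lemma decode_encode_seqs:
  assumes \<gamma>: "\<gamma> \<in> Field k"
  shows "s \<gamma> \<in> gbaire_space k V \<Longrightarrow> decode_seq (encode_seqs s t) 0 \<gamma> = s \<gamma>"
    and "t \<gamma> \<in> gbaire_space k V \<Longrightarrow> decode_seq (encode_seqs s t) 1 \<gamma> = t \<gamma>"
proof -
  have "decode_seq (encode_seqs s t) 0 \<gamma> = restrict (s \<gamma>) (Field k)"
    and "decode_seq (encode_seqs s t) 1 \<gamma> = restrict (t \<gamma>) (Field k)"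
    unfolding decode_seq_def using \<gamma>
    by (intro restrict_cong; simp add: encode_seqs_def pair_in_Field tag_in_Field)+
  then show "s \<gamma> \<in> gbaire_space k V \<Longrightarrow> decode_seq (encode_seqs s t) 0 \<gamma> = s \<gamma>"
    and "t \<gamma> \<in> gbaire_space k V \<Longrightarrow> decode_seq (encode_seqs s t) 1 \<gamma> = t \<gamma>"
    by (simp_all add: gbaire_space_def PiE_restrict)
qed

lemma continuous_map_code:
  assumes "regularCard k" "\<alpha> \<in> Field k"
  shows "continuous_map (prod_topology (gbaire k (Field k)) (gbaire k (Field k))) (gbaire k (Field k))
    (\<lambda>(y, p). code \<alpha> y (decode_seq p 0))"
proof (rule continuous_map_prod_gbaire_coordinatewise[OF assms, where h = "\<lambda>\<xi>. \<pi> (tag 0, snd (unpair \<xi>))"])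
  show "(\<lambda>\<xi>. \<pi> (tag 0, snd (unpair \<xi>))) ` Field k \<subseteq> Field k"
  proof (rule image_subsetI)
    fix \<xi> assume "\<xi> \<in> Field k"
    then have "snd (unpair \<xi>) \<in> Field k"
      by (rule unpair_in_Field)
    then show "\<pi> (tag 0, snd (unpair \<xi>)) \<in> Field k"
      by (rule pair_in_Field[OF tag_in_Field])
  qed
next
  fix y p assume y: "y \<in> gbaire_space k (Field k)" and p: "p \<in> gbaire_space k (Field k)"
  have "code \<alpha> y (decode_seq p 0) \<in> gbaire_space k (Field k)"
  proof (rule code_in_gbaire_space[OF assms(2) y])
    fix \<gamma> \<epsilon> assume "\<gamma> \<in> underS k \<alpha>" "\<epsilon> \<in> Field k"
    then show "decode_seq p 0 \<gamma> \<epsilon> \<in> Field k"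
      using gbaire_spaceD[OF decode_seq_in_gbaire_space[OF p underS_Field]] by blast
  qed
  then show "(case (y, p) of (y, p) \<Rightarrow> code \<alpha> y (decode_seq p 0)) \<in> gbaire_space k (Field k)"
    by simp
next
  fix y p y' p' :: "'a \<Rightarrow> 'a" and \<xi>
  assume "\<xi> \<in> Field k" and y: "agree_below k \<alpha> y y'"
    and p: "p (\<pi> (tag 0, snd (unpair \<xi>))) = p' (\<pi> (tag 0, snd (unpair \<xi>)))"
  obtain i \<delta> where i: "i \<in> Field k" and \<delta>: "\<delta> \<in> Field k" and \<xi>: "\<xi> = \<pi> (i, \<delta>)"
    using \<open>\<xi> \<in> Field k\<close> by (rule Field_pairE)
  obtain \<gamma> \<epsilon> where \<gamma>: "\<gamma> \<in> Field k" and \<epsilon>: "\<epsilon> \<in> Field k" and \<delta>_eq: "\<delta> = \<pi> (\<gamma>, \<epsilon>)"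
    using \<delta> by (rule Field_pairE)
  have "decode_seq p 0 \<gamma> \<epsilon> = decode_seq p' 0 \<gamma> \<epsilon>"
    using p i \<gamma> \<epsilon> by (simp add: \<xi> \<delta>_eq decode_seq_def pair_in_Field)
  then show "(case (y, p) of (y, p) \<Rightarrow> code \<alpha> y (decode_seq p 0)) \<xi> =
    (case (y', p') of (y, p) \<Rightarrow> code \<alpha> y (decode_seq p 0)) \<xi>"
    using y i \<gamma> \<epsilon> by (simp add: \<xi> \<delta>_eq code_def agree_below_def pair_in_Field)
qed

lemma continuous_map_decode_seq:
  assumes "regularCard k" "\<alpha> \<in> Field k"
  shows "continuous_map (prod_topology (gbaire k (Field k)) (gbaire k (Field k))) (gbaire k (Field k))
    (\<lambda>(y, p). decode_seq p n \<alpha>)"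
proof (rule continuous_map_prod_gbaire_coordinatewise[OF assms, where h = "\<lambda>\<epsilon>. \<pi> (tag n, \<pi> (\<alpha>, \<epsilon>))"])
  show "(\<lambda>\<epsilon>. \<pi> (tag n, \<pi> (\<alpha>, \<epsilon>))) ` Field k \<subseteq> Field k"
    using assms(2) by (auto simp: pair_in_Field tag_in_Field)
next
  fix y p :: "'a \<Rightarrow> 'a" assume "p \<in> gbaire_space k (Field k)"
  then show "(case (y, p) of (y, p) \<Rightarrow> decode_seq p n \<alpha>) \<in> gbaire_space k (Field k)"
    using decode_seq_in_gbaire_space assms(2) by simp
next
  fix y p y' p' :: "'a \<Rightarrow> 'a" and \<xi>
  assume "p (\<pi> (tag n, \<pi> (\<alpha>, \<xi>))) = p' (\<pi> (tag n, \<pi> (\<alpha>, \<xi>)))"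
  then show "(case (y, p) of (y, p) \<Rightarrow> decode_seq p n \<alpha>) \<xi> = (case (y', p') of (y, p) \<Rightarrow> decode_seq p n \<alpha>) \<xi>"
    by (simp add: decode_seq_def)
qed

end

section \<open>Continuous images of closed sets\<close>

locale gbaire_names = gbaire_pairing k \<pi> tag for k :: "'a rel" and \<pi> tag +
  fixes M :: "'b set" and name :: "'b \<Rightarrow> 'a \<Rightarrow> 'a"
  assumes inj_on_name: "inj_on name M" and name_in_gbaire_space: "name ` M \<subseteq> gbaire_space k (Field k)"
begin

definition codes :: "('a \<Rightarrow> 'b) set \<Rightarrow> (('a \<Rightarrow> 'b) \<Rightarrow> 'a \<Rightarrow> 'a) \<Rightarrow> ('a \<Rightarrow> 'a) set" where
  "codes A f = {code \<alpha> (f x) (\<lambda>\<gamma>. name (x \<gamma>)) | \<alpha> x. \<alpha> \<in> Field k \<and> x \<in> A}"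

definition witnessed :: "(('a \<Rightarrow> 'a) \<times> ('a \<Rightarrow> 'a)) set \<Rightarrow> (('a \<Rightarrow> 'a) \<times> ('a \<Rightarrow> 'a)) set" where
  "witnessed D = {(y, p). y \<in> gbaire_space k (Field k) \<and> p \<in> gbaire_space k (Field k) \<and>
     (\<forall>\<alpha>\<in>Field k. (code \<alpha> y (decode_seq p 0), decode_seq p 1 \<alpha>) \<in> D)}"

lemma closedin_witnessed:
  assumes "regularCard k" and D: "closedin (prod_topology (gbaire k (Field k)) (gbaire k (Field k))) D"
  shows "closedin (prod_topology (gbaire k (Field k)) (gbaire k (Field k))) (witnessed D)"
proof -
  let ?X = "prod_topology (gbaire k (Field k)) (gbaire k (Field k))"
  let ?g = "\<lambda>\<alpha> (y, p). (code \<alpha> y (decode_seq p 0), decode_seq p 1 \<alpha>)"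
  have "closedin ?X {z \<in> topspace ?X. ?g \<alpha> z \<in> D}" if \<alpha>: "\<alpha> \<in> Field k" for \<alpha>
  proof (rule closedin_continuous_map_preimage[OF _ D])
    have "fst \<circ> ?g \<alpha> = (\<lambda>(y, p). code \<alpha> y (decode_seq p 0))" "snd \<circ> ?g \<alpha> = (\<lambda>(y, p). decode_seq p 1 \<alpha>)"
      by auto
    then show "continuous_map ?X ?X (?g \<alpha>)"
      using continuous_map_code[OF assms(1) \<alpha>] continuous_map_decode_seq[OF assms(1) \<alpha>]
      by (simp add: continuous_map_pairwise)
  qed
  then have "closedin ?X (\<Inter>\<alpha>\<in>Field k. {z \<in> topspace ?X. ?g \<alpha> z \<in> D})"
    using Field_not_empty by blast
  moreover have "witnessed D = (\<Inter>\<alpha>\<in>Field k. {z \<in> topspace ?X. ?g \<alpha> z \<in> D})"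
    using Field_not_empty unfolding witnessed_def by (auto simp: topspace_gbaire)
  ultimately show ?thesis
    by simp
qed

lemma image_subset_fst_witnessed:
  assumes A: "A \<subseteq> gbaire_space k M" and f: "f ` A \<subseteq> gbaire_space k (Field k)"
    and D: "D \<subseteq> gbaire_space k (Field k) \<times> gbaire_space k (Field k)" and codes: "codes A f \<subseteq> fst ` D"
  shows "f ` A \<subseteq> fst ` witnessed D"
proof (rule image_subsetI)
  fix x assume x: "x \<in> A"
  have "\<exists>v. (code \<alpha> (f x) (\<lambda>\<gamma>. name (x \<gamma>)), v) \<in> D" if "\<alpha> \<in> Field k" for \<alpha>
  proof -
    have "code \<alpha> (f x) (\<lambda>\<gamma>. name (x \<gamma>)) \<in> fst ` D"
      using codes x that unfolding codes_def by blast
    then show ?thesis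
      by force
  qed
  then obtain v where v: "\<And>\<alpha>. \<alpha> \<in> Field k \<Longrightarrow> (code \<alpha> (f x) (\<lambda>\<gamma>. name (x \<gamma>)), v \<alpha>) \<in> D"
    by metis
  have v_in: "v \<alpha> \<in> gbaire_space k (Field k)" if "\<alpha> \<in> Field k" for \<alpha>
    using v[OF that] D by blast
  have name_in: "name (x \<gamma>) \<in> gbaire_space k (Field k)" if "\<gamma> \<in> Field k" for \<gamma>
    using name_in_gbaire_space gbaire_spaceD[of x k M \<gamma>] A x that by blast
  let ?p = "encode_seqs (\<lambda>\<gamma>. name (x \<gamma>)) v"
  have "(code \<alpha> (f x) (decode_seq ?p 0), decode_seq ?p 1 \<alpha>) \<in> D" if \<alpha>: "\<alpha> \<in> Field k" for \<alpha>
  proof -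
    have "decode_seq ?p 0 \<gamma> = name (x \<gamma>)" if "\<gamma> \<in> underS k \<alpha>" for \<gamma>
      using decode_encode_seqs(1)[where s = "\<lambda>\<gamma>. name (x \<gamma>)", OF underS_Field[OF that]]
        name_in[OF underS_Field[OF that]] by blast
    then have "code \<alpha> (f x) (decode_seq ?p 0) = code \<alpha> (f x) (\<lambda>\<gamma>. name (x \<gamma>))"
      unfolding code_eq_iff by simp
    moreover have "decode_seq ?p 1 \<alpha> = v \<alpha>"
      using decode_encode_seqs(2)[where t = v, OF \<alpha>] v_in[OF \<alpha>] by blast
    ultimately show ?thesis
      using v[OF \<alpha>] by simp
  qed
  moreover have "?p \<in> gbaire_space k (Field k)"
    using name_in v_in by (rule encode_seqs_in_gbaire_space)
  ultimately have "(f x, ?p) \<in> witnessed D"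
    using f x unfolding witnessed_def by blast
  then show "f x \<in> fst ` witnessed D"
    by force
qed

definition decoded_point :: "('a \<Rightarrow> 'a) \<Rightarrow> 'a \<Rightarrow> 'b" where
  "decoded_point p = (\<lambda>\<gamma>\<in>Field k. the_inv_into M name (decode_seq p 0 \<gamma>))"

lemma witnessed_approx:
  assumes A: "A \<subseteq> gbaire_space k M" and D: "fst ` D \<subseteq> codes A f \<union> marked ` name ` M"
    and yp: "(y, p) \<in> witnessed D" and \<alpha>: "\<alpha> \<in> Field k"
  shows "\<exists>x\<in>A. agree_below k \<alpha> (decoded_point p) x \<and> agree_below k \<alpha> y (f x)"
proof -
  have p: "p \<in> gbaire_space k (Field k)" and "(code \<alpha> y (decode_seq p 0), decode_seq p 1 \<alpha>) \<in> D"
    using yp \<alpha> unfolding witnessed_def by blast+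
  then have "code \<alpha> y (decode_seq p 0) \<in> fst ` D"
    by (metis fst_conv image_eqI)
  moreover have "code \<alpha> y (decode_seq p 0) \<notin> marked ` name ` M"
    using code_neq_marked by blast
  ultimately obtain \<alpha>' x where x: "x \<in> A" and "code \<alpha> y (decode_seq p 0) = code \<alpha>' (f x) (\<lambda>\<gamma>. name (x \<gamma>))"
    using D unfolding codes_def by blast
  then have agree: "agree_below k \<alpha> y (f x)"
    and names: "\<forall>\<gamma>\<in>underS k \<alpha>. \<forall>\<epsilon>\<in>Field k. decode_seq p 0 \<gamma> \<epsilon> = name (x \<gamma>) \<epsilon>"
    unfolding code_eq_iff by auto
  have "decoded_point p \<gamma> = x \<gamma>" if \<gamma>: "\<gamma> \<in> underS k \<alpha>" for \<gamma>
  proof -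
    have x\<gamma>: "x \<gamma> \<in> M"
      using gbaire_spaceD[OF subsetD[OF A x] underS_Field[OF \<gamma>]] .
    have "decode_seq p 0 \<gamma> = name (x \<gamma>)"
    proof (rule gbaire_space_eqI)
      show "decode_seq p 0 \<gamma> \<in> gbaire_space k (Field k)"
        using p underS_Field[OF \<gamma>] by (rule decode_seq_in_gbaire_space)
      show "name (x \<gamma>) \<in> gbaire_space k (Field k)"
        using name_in_gbaire_space x\<gamma> by blast
      show "decode_seq p 0 \<gamma> \<epsilon> = name (x \<gamma>) \<epsilon>" if "\<epsilon> \<in> Field k" for \<epsilon>
        using names \<gamma> that by blast
    qed
    then show ?thesis
      using underS_Field[OF \<gamma>] x\<gamma> by (simp add: decoded_point_def the_inv_into_f_f[OF inj_on_name])
  qed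
  with x agree show ?thesis
    unfolding agree_below_def by blast
qed

lemma fst_witnessed_subset_image:
  assumes A: "closedin (gbaire k M) A"
    and f: "continuous_map (subtopology (gbaire k M) A) (gbaire k (Field k)) f"
    and D: "fst ` D \<subseteq> codes A f \<union> marked ` name ` M"
  shows "fst ` witnessed D \<subseteq> f ` A"
proof
  fix y assume "y \<in> fst ` witnessed D"
  then obtain p where yp: "(y, p) \<in> witnessed D"
    by force
  have A_sub: "A \<subseteq> gbaire_space k M"
    using A by (rule closedin_gbaire_subset)
  note approx = witnessed_approx[OF A_sub D yp]
  have "decoded_point p \<gamma> \<in> M" if \<gamma>: "\<gamma> \<in> Field k" for \<gamma>
  proof -
    obtain \<alpha> where \<alpha>: "\<alpha> \<in> Field k" "\<gamma> \<in> underS k \<alpha>"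
      using exists_above \<gamma> by blast
    then obtain x where "x \<in> A" "agree_below k \<alpha> (decoded_point p) x"
      using approx by blast
    then show ?thesis
      using gbaire_spaceD[OF subsetD[OF A_sub] \<gamma>] agree_belowD[OF _ \<alpha>(2)] by metis
  qed
  then have "decoded_point p \<in> gbaire_space k M"
    by (simp add: gbaire_space_def decoded_point_def)
  moreover have "y \<in> gbaire_space k (Field k)"
    using yp unfolding witnessed_def by blast
  ultimately have "decoded_point p \<in> A" "f (decoded_point p) = y"
    using continuous_map_gbaire_limit[OF f A _ _ approx] by blast+
  then show "y \<in> f ` A"
    by blast
qed

lemma card_of_codes:
  assumes M: "infinite M" "|Field k| \<le>o |M|" and powers: "\<forall>\<alpha>\<in>Field k. |underS k \<alpha> \<rightarrow>\<^sub>E M| \<le>o |M|"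
    and A: "A \<subseteq> gbaire_space k M" and f: "f ` A \<subseteq> gbaire_space k (Field k)"
  shows "|codes A f| \<le>o |M|"
proof -
  have each: "|{code \<alpha> (f x) (\<lambda>\<gamma>. name (x \<gamma>)) | x. x \<in> A}| \<le>o |M|" if \<alpha>: "\<alpha> \<in> Field k" for \<alpha>
  proof -
    let ?F = "\<lambda>t. code \<alpha> (\<lambda>\<delta>. fst (t \<delta>)) (\<lambda>\<gamma>. name (snd (t \<gamma>)))"
    have "{code \<alpha> (f x) (\<lambda>\<gamma>. name (x \<gamma>)) | x. x \<in> A} \<subseteq> ?F ` (underS k \<alpha> \<rightarrow>\<^sub>E Field k \<times> M)"
    proof
      fix z assume "z \<in> {code \<alpha> (f x) (\<lambda>\<gamma>. name (x \<gamma>)) | x. x \<in> A}"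
      then obtain x where x: "x \<in> A" and z: "z = code \<alpha> (f x) (\<lambda>\<gamma>. name (x \<gamma>))"
        by blast
      let ?t = "\<lambda>\<delta>\<in>underS k \<alpha>. (f x \<delta>, x \<delta>)"
      have "(f x \<delta>, x \<delta>) \<in> Field k \<times> M" if "\<delta> \<in> underS k \<alpha>" for \<delta>
        using gbaire_spaceD[OF _ underS_Field[OF that], of "f x"] gbaire_spaceD[OF _ underS_Field[OF that], of x]
          f A x by blast
      then have "?t \<in> underS k \<alpha> \<rightarrow>\<^sub>E Field k \<times> M"
        by simp
      moreover have "?F ?t = z"
        unfolding z code_eq_iff agree_below_def by simp
      ultimately show "z \<in> ?F ` (underS k \<alpha> \<rightarrow>\<^sub>E Field k \<times> M)"
        by blast
    qed
    then have "|{code \<alpha> (f x) (\<lambda>\<gamma>. name (x \<gamma>)) | x. x \<in> A}| \<le>o |underS k \<alpha> \<rightarrow>\<^sub>E Field k \<times> M|"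
      using card_of_mono1 card_of_image ordLeq_transitive by blast
    also have "|underS k \<alpha> \<rightarrow>\<^sub>E Field k \<times> M| \<le>o |M|"
      using card_of_PiE_Times_ordLeq[OF M] powers \<alpha> by blast
    finally show ?thesis .
  qed
  have "|\<Union>\<alpha>\<in>Field k. {code \<alpha> (f x) (\<lambda>\<gamma>. name (x \<gamma>)) | x. x \<in> A}| \<le>o |M|"
    using each by (intro card_of_UNION_ordLeq_infinite[OF M]) blast
  moreover have "codes A f = (\<Union>\<alpha>\<in>Field k. {code \<alpha> (f x) (\<lambda>\<gamma>. name (x \<gamma>)) | x. x \<in> A})"
    unfolding codes_def by blast
  ultimately show ?thesis
    by simp
qed

lemma card_of_codes_Un_marked:
  assumes M: "infinite M" "|Field k| \<le>o |M|" and powers: "\<forall>\<alpha>\<in>Field k. |underS k \<alpha> \<rightarrow>\<^sub>E M| \<le>o |M|"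
    and A: "A \<subseteq> gbaire_space k M" and f: "f ` A \<subseteq> gbaire_space k (Field k)"
  shows "( |codes A f \<union> marked ` name ` M|, |M| ) \<in> ordIso"
proof -
  have "inj_on (marked \<circ> name) M"
    using comp_inj_on[OF inj_on_name inj_on_subset[OF inj_on_marked name_in_gbaire_space]] .
  then have marked: "( |M|, |marked ` name ` M| ) \<in> ordIso"
    by (metis card_of_ordIso image_comp inj_on_imp_bij_betw)
  have "|codes A f \<union> marked ` name ` M| \<le>o |M|"
    using card_of_codes[OF assms] ordIso_imp_ordLeq[OF ordIso_symmetric[OF marked]] M(1)
    by (intro card_of_Un_ordLeq_infinite_Field) (simp_all add: Field_card_of card_of_card_order_on)
  moreover have "|M| \<le>o |codes A f \<union> marked ` name ` M|"
    using ordIso_ordLeq_trans[OF marked card_of_mono1] by blast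
  ultimately show ?thesis
    by (simp add: ordIso_iff_ordLeq)
qed

lemma codes_Un_marked_subset:
  assumes "A \<subseteq> gbaire_space k M" "f ` A \<subseteq> gbaire_space k (Field k)"
  shows "codes A f \<union> marked ` name ` M \<subseteq> gbaire_space k (Field k)"
proof -
  have "code \<alpha> (f x) (\<lambda>\<gamma>. name (x \<gamma>)) \<in> gbaire_space k (Field k)" if "\<alpha> \<in> Field k" "x \<in> A" for \<alpha> x
  proof (rule code_in_gbaire_space)
    fix \<gamma> \<epsilon> assume "\<gamma> \<in> underS k \<alpha>" "\<epsilon> \<in> Field k"
    then have "name (x \<gamma>) \<in> gbaire_space k (Field k)"
      using name_in_gbaire_space gbaire_spaceD[OF subsetD[OF assms(1) \<open>x \<in> A\<close>] underS_Field] by blast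
    then show "name (x \<gamma>) \<epsilon> \<in> Field k"
      using \<open>\<epsilon> \<in> Field k\<close> by (rule gbaire_spaceD)
  qed (use that assms(2) in blast)+
  moreover have "marked ` name ` M \<subseteq> gbaire_space k (Field k)"
    using name_in_gbaire_space marked_in_gbaire_space by blast
  ultimately show ?thesis
    unfolding codes_def by blast
qed

lemma Sigma11_continuous_image_if_codes_Sigma11:
  assumes regular: "regularCard k" and A: "closedin (gbaire k M) A"
    and f: "continuous_map (subtopology (gbaire k M) A) (gbaire k (Field k)) f"
    and codes: "Sigma11 k (codes A f \<union> marked ` name ` M)"
  shows "Sigma11 k (f ` A)"
proof -
  obtain D where D: "closedin (prod_topology (gbaire k (Field k)) (gbaire k (Field k))) D"
    and codes_eq: "codes A f \<union> marked ` name ` M = fst ` D"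
    using codes unfolding Sigma11_def by blast
  have A_sub: "A \<subseteq> gbaire_space k M"
    using A by (rule closedin_gbaire_subset)
  have D_sub: "D \<subseteq> gbaire_space k (Field k) \<times> gbaire_space k (Field k)"
    using closedin_subset[OF D] by (simp add: topspace_gbaire)
  have "codes A f \<subseteq> fst ` D"
    using codes_eq by blast
  then have "f ` A \<subseteq> fst ` witnessed D"
    by (rule image_subset_fst_witnessed[OF A_sub continuous_map_gbaire_image_subset[OF f A_sub] D_sub])
  moreover have "fst ` witnessed D \<subseteq> f ` A"
    by (rule fst_witnessed_subset_image[OF A f equalityD2[OF codes_eq]])
  ultimately have "f ` A = fst ` witnessed D"
    by (rule equalityI)
  then show ?thesis
    unfolding Sigma11_def using closedin_witnessed[OF regular D] by blast
qed

end

context infinite_cardinal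
begin

lemma ex_inj_on_into_gbaire_space:
  assumes "|M| <o |Pow (Field k)|"
  shows "\<exists>name. inj_on name M \<and> name ` M \<subseteq> gbaire_space k (Field k)"
proof -
  obtain a where a: "a \<in> Field k"
    using Field_not_empty by blast
  moreover obtain b where "b \<in> Field k - {a}"
    using infinite_remove[OF infinite_Field, of a] by (metis ex_in_conv finite.emptyI)
  ultimately have "|Pow (Field k)| \<le>o |gbaire_space k (Field k)|"
    unfolding gbaire_space_def by (intro card_of_Pow_ordLeq_PiE[of a _ b]) auto
  then have "|M| \<le>o |gbaire_space k (Field k)|"
    using ordLess_imp_ordLeq[OF assms] ordLeq_transitive by blast
  then show ?thesis
    by (simp add: card_of_ordLeq[symmetric])
qed

lemma Sigma11_image_of_subsingleton_values:
  assumes M: "\<forall>m\<in>M. \<forall>m'\<in>M. m = m'"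
    and small_sets: "\<forall>X. X \<subseteq> gbaire_space k (Field k) \<and> ( |X|, |M| ) \<in> ordIso \<longrightarrow> Sigma11 k X"
    and A: "A \<subseteq> gbaire_space k M" and f: "f ` A \<subseteq> gbaire_space k (Field k)"
  shows "Sigma11 k (f ` A)"
proof (cases "A = {}")
  case True
  then show ?thesis
    by (simp add: Sigma11_empty)
next
  case False
  then obtain x where x: "x \<in> A"
    by blast
  have "x' = x" if "x' \<in> A" for x'
    using gbaire_space_eqI[OF subsetD[OF A that] subsetD[OF A x]] gbaire_spaceD[OF subsetD[OF A]] M that x
    by metis
  then have image: "f ` A = {f x}"
    using x by blast
  obtain \<gamma> where "\<gamma> \<in> Field k"
    using Field_not_empty by blast
  then have "M = {x \<gamma>}"
    using gbaire_spaceD[OF subsetD[OF A x]] M by blast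
  then have "bij_betw (\<lambda>_. x \<gamma>) (f ` A) M"
    unfolding image by (simp add: bij_betw_def)
  then have "( |f ` A|, |M| ) \<in> ordIso"
    using card_of_ordIso by blast
  then show ?thesis
    using small_sets f by blast
qed

lemma Sigma11_continuous_image_of_nontrivial_values:
  assumes regular: "regularCard k"
    and M: "m \<in> M" "m' \<in> M" "m \<noteq> m'"
    and powers: "\<forall>\<alpha>\<in>Field k. |underS k \<alpha> \<rightarrow>\<^sub>E M| \<le>o |M|"
    and below_Pow: "|M| <o |Pow (Field k)|"
    and small_sets: "\<forall>X. X \<subseteq> gbaire_space k (Field k) \<and> ( |X|, |M| ) \<in> ordIso \<longrightarrow> Sigma11 k X"
    and A: "closedin (gbaire k M) A"
    and f: "continuous_map (subtopology (gbaire k M) A) (gbaire k (Field k)) f"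
  shows "Sigma11 k (f ` A)"
proof -
  have Field_le_M: "|Field k| \<le>o |M|"
    using card_of_Field_ordLeq_if_PiE_ordLeq[OF card_order M powers] .
  then have "infinite M"
    using infinite_Field card_of_ordLeq_finite by blast
  obtain \<pi> where \<pi>: "bij_betw \<pi> (Field k \<times> Field k) (Field k)"
    using card_of_Times_same_infinite[OF infinite_Field] card_of_ordIso by blast
  obtain tag :: "nat \<Rightarrow> 'a" where "inj tag" "range tag \<subseteq> Field k"
    using infinite_countable_subset[OF infinite_Field] by blast
  moreover obtain name where "inj_on name M" "name ` M \<subseteq> gbaire_space k (Field k)"
    using ex_inj_on_into_gbaire_space[OF below_Pow] by blast
  ultimately interpret gbaire_names k \<pi> tag M name
    using \<pi> by unfold_locales auto
  have A_sub: "A \<subseteq> gbaire_space k M"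
    using A by (rule closedin_gbaire_subset)
  have f_sub: "f ` A \<subseteq> gbaire_space k (Field k)"
    using continuous_map_gbaire_image_subset[OF f A_sub] .
  have "Sigma11 k (codes A f \<union> marked ` name ` M)"
    using small_sets codes_Un_marked_subset[OF A_sub f_sub]
      card_of_codes_Un_marked[OF \<open>infinite M\<close> Field_le_M powers A_sub f_sub] by blast
  then show ?thesis
    by (rule Sigma11_continuous_image_if_codes_Sigma11[OF regular A f])
qed

end

theorem proposition1p20:
  fixes k :: "'a rel" and M :: "'b set"
  assumes card: "Card_order k"
    and uncountable: "\<not> countable (Field k)"
    and regular: "regularCard k"
    and mu_lt_kappa: "\<forall>\<alpha>\<in>Field k. (card_of (underS k \<alpha> \<rightarrow>\<^sub>E M), card_of M) \<in> ordLeq"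
    and mu_less_pow: "(card_of M, card_of (Pow (Field k))) \<in> ordLess"
    and small_sets: "\<forall>X. X \<subseteq> gbaire_space k (Field k) \<and> (card_of X, card_of M) \<in> ordIso \<longrightarrow> Sigma11 k X"
  shows "\<forall>A f. closedin (gbaire k M) A \<and>
            continuous_map (subtopology (gbaire k M) A) (gbaire k (Field k)) f
            \<longrightarrow> Sigma11 k (f ` A)"
proof (intro allI impI, elim conjE)
  fix A and f :: "('a \<Rightarrow> 'b) \<Rightarrow> 'a \<Rightarrow> 'a"
  assume A: "closedin (gbaire k M) A"
    and f: "continuous_map (subtopology (gbaire k M) A) (gbaire k (Field k)) f"
  \<comment> \<open>only the infinity of \<kappa> is used, not its uncountability\<close>
  interpret infinite_cardinal k
    using card uncountable countable_finite by unfold_locales blast+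
  have A_sub: "A \<subseteq> gbaire_space k M"
    using A by (rule closedin_gbaire_subset)
  show "Sigma11 k (f ` A)"
  proof (cases "\<forall>m\<in>M. \<forall>m'\<in>M. m = m'")
    case True
    then show ?thesis
      using Sigma11_image_of_subsingleton_values[OF True small_sets A_sub]
        continuous_map_gbaire_image_subset[OF f A_sub] by blast
  next
    case False
    then obtain m m' where "m \<in> M" "m' \<in> M" "m \<noteq> m'"
      by blast
    then show ?thesis
      using Sigma11_continuous_image_of_nontrivial_values[OF regular _ _ _ mu_lt_kappa mu_less_pow small_sets A f]
      by blast
  qed
qed

end
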